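(* Assume $1\le k\le n-1$ and the setting of the context. Then $\mathbb V=\bigoplus_{\alpha\in\Omega_{\mathbb V}}V_\alpha$, where each $V_\alpha$ is a $k$-submodule of $\mathbb V$ (i.e. $[u,y_2,\dots,y_k,x_{k+1},\dots,x_n]_\sigma\in V_\alpha$ for all $\sigma$, $u\in V_\alpha$, $y_l\in\mathbb V$, $x_l\in\mathbb A$) admitting a multiplicative basis inherited from $\mathfrak B$ (a subset of $\mathfrak B$ which is a basis of $V_\alpha$), and $\mathbb A=\bigoplus_{\beta\in\Omega_{\mathbb A}}A_\beta$, where each $A_\beta$ is an ideal of $\mathbb A$ (i.e. $\langle a_1,\dots,a_n\rangle\in A_\beta$ whenever some $a_l\in A_\beta$ and the others lie in $\mathbb A$) admitting a multiplicative basis inherited from $\mathfrak B'$. Furthermore, setting $\Omega'_{\mathbb V}=\{\alpha\in\Omega_{\mathbb V}:\mathcal P(V_\alpha,\mathbb V,\dots,\mathbb V;\mathbb A,\dots,\mathbb A)\neq0\}$ and $\Omega'_{\mathbb A}=\{\beta\in\Omega_{\mathbb A}:\mathcal P(\mathbb V,\dots,\mathbb V;A_\beta,\mathbb A,\dots,\mathbb A)\neq0\}$, there is a bijection $f:\Omega'_{\mathbb V}\to\Omega'_{\mathbb A}$ such that for every $\alpha\in\Omega'_{\mathbb V}$, $\mathcal P(V_\alpha,\mathbb V,\dots,\mathbb V;A_{f(\alpha)},\mathbb A,\dots,\mathbb A)\neq0$ and $\mathcal P(V_\alpha,\mathbb V,\dots,\mathbb V;A_\beta,\mathbb A,\dots,\mathbb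 A)=0$ for every $\beta\in\Omega_{\mathbb A}$ with $\beta\neq f(\alpha)$.
   Context: Fix integers $n\ge2$, $1\le k\le n$, and an arbitrary field $\mathbb F$; $S_n$ is the symmetric group. An $n$-ary algebra is an $\mathbb F$-vector space $\mathbb A$ with an $n$-linear map $\langle\cdot,\dots,\cdot\rangle:\mathbb A^n\to\mathbb A$; a basis $\mathfrak B'=\{e_j\}_{j\in J}$ of $\mathbb A$ is multiplicative if $\langle e_{j_1},\dots,e_{j_n}\rangle\in\mathbb F e_j$ for some $j\in J$, for all $j_1,\dots,j_n\in J$. Let $\mathbb V$ be a $k$-module over $\mathbb A$: an $\mathbb F$-vector space with, for every $\sigma\in S_n$, an $n$-linear map $\mathbb V^k\times\mathbb A^{n-k}\to\mathbb V$, $(y_1,\dots,y_k,x_{k+1},\dots,x_n)\mapsto[y_1,\dots,y_k,x_{k+1},\dots,x_n]_\sigma$ (the $l$-th argument placed in position $\sigma(l)$), and assume $\mathbb V$ has a basis $\mathfrak B=\{v_i\}_{i\in I}$ which is multiplicative with respect to $\mathfrak B'$, i.e. $[v_{i_1},\dots,v_{i_k},e_{j_{k+1}},\dots,e_{j_n}]_\sigma\in\mathbb F v_r$ for some $r\in I$, for all $\sigma$ and indices. Dimensions are arbitrary. For subspaces $S_1,\dots,S_k\subseteq\mathbb V$ and $T_{k+1},\dots,T_n\subseteq\mathbb A$ let $\mathcal P(S_1,\dots,S_k;T_{k+1},\dots,T_n)$ be the linear span of all $[s_1,\dots,s_k,t_{k+1},\dots,t_n]_\sigma$ with $\sigma\in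 S_n$, $s_l\in S_l$, $t_l\in T_l$. Construction: on $\mathbb A\oplus\mathbb V$ with basis $\mathfrak B''=\mathfrak B\,\dot\cup\,\mathfrak B'$ (index set $K=I\,\dot\cup\,J$) define, for every $\sigma\in S_n$, $n$-linear maps $\llbracket\cdot\rrbracket_\sigma$ by: $\llbracket x_1,\dots,x_n\rrbracket_\sigma$ is $\langle\cdot\rangle$ applied to the arguments $x_l\in\mathbb A$ placed in positions $\sigma(l)$; $\llbracket y_1,\dots,y_k,x_{k+1},\dots,x_n\rrbracket_\sigma=[y_1,\dots,y_k,x_{k+1},\dots,x_n]_\sigma$ for $y_l\in\mathbb V$, $x_l\in\mathbb A$; and $\llbracket y_1,\dots,y_t,x_{t+1},\dots,x_n\rrbracket_\sigma=0$ for $y_l\in\mathbb V$, $x_l\in\mathbb A$, $1\le t\le n$, $t\neq k$. Then $\mathbb A\oplus\mathbb V$ with these maps is an $n$-module over itself (the case "$k=n$", no second-type arguments) with multiplicative basis $\mathfrak B''$. Connections on $K$: let $\overline K=\{\overline x:x\in K\}$ be new symbols, $\overline{\overline x}=x$, and write $u_x$ for the element of $\mathfrak B''$ indexed by $x\in K$. For $\sigma\in S_n$ and $x_1,\dots,x_n\in K$ let $a_\sigma(x_1,\dots,x_n)=\emptyset$ if $\llbracket u_{x_1},\dots,u_{x_n}\rrbracket_\sigma=0$ and $=\{r\}$ if it is a nonzero element of $\mathbb F u_r$; let $b_\sigma(x,\overline x_2,\dots,\overline x_n)=\{x'\in K:a_\sigma(x',x_2,\dots,x_n)=\{x\}\}$.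 For $x\in K$ and $Z=(z_2,\dots,z_n)\in(K\,\dot\cup\,\overline K)^{n-1}$ set $\mu(x,Z)=\bigcup_\sigma a_\sigma(x,Z)$ if all $z_l\in K$, $=\bigcup_\sigma b_\sigma(x,Z)$ if all $z_l\in\overline K$, and $\emptyset$ otherwise; $\phi(\mathfrak A,Z)=\bigcup_{x\in\mathfrak A}\mu(x,Z)$ for $\mathfrak A\subseteq K$. Distinct $x,x'\in K$ are connected if there are $Z_1,\dots,Z_t\in(K\,\dot\cup\,\overline K)^{n-1}$, $t\ge1$, such that with $\mathfrak A_0=\{x\}$, $\mathfrak A_m=\phi(\mathfrak A_{m-1},Z_m)$ one has $\mathfrak A_m\neq\emptyset$ for $m<t$ and $x'\in\mathfrak A_t$; each $x$ is connected to itself. This is an equivalence relation on $K$; let $\Omega$ be its set of classes and, for $\alpha\in\Omega$, $U_\alpha=\bigoplus_{x\in\alpha}\mathbb F u_x$, so $\mathbb A\oplus\mathbb V=\bigoplus_{\alpha\in\Omega}U_\alpha$. Put $V_\alpha=U_\alpha\cap\mathbb V$, $A_\alpha=U_\alpha\cap\mathbb A$, $\Omega_{\mathbb V}=\{\alpha\in\Omega:V_\alpha\neq0\}$, $\Omega_{\mathbb A}=\{\alpha\in\Omega:A_\alpha\neq0\}$. *)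

theory Defs
  imports Complex_Main "HOL-Combinatorics.Permutations"
begin

text \<open>Abstract vector spaces over a field 'f are given by scalar multiplications
  sA :: 'f => 'a => 'a (the algebra A) and sV :: 'f => 'v => 'v (the module V);
  linear notions (span, subspace, dependent) are those of HOL's Modules theory.
  Positions of arguments are numbered 0..n-1; S_n is {s. s permutes {0..<n}}.\<close>

definition multilinear ::
  "('f::field \<Rightarrow> 'b::ab_group_add \<Rightarrow> 'b) \<Rightarrow> ('f \<Rightarrow> 'c::ab_group_add \<Rightarrow> 'c) \<Rightarrow> nat
     \<Rightarrow> ('b list \<Rightarrow> 'c) \<Rightarrow> bool" where
  "multilinear s t m f \<longleftrightarrow>
     (\<forall>xs. length xs = m \<longrightarrow>
        (\<forall>i<m. \<forall>x y. f (xs[i := x + y]) = f (xs[i := x]) + f (xs[i := y])) \<and>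
        (\<forall>i<m. \<forall>c x. f (xs[i := s c x]) = t c (f (xs[i := x]))))"

definition internal_direct_sum ::
  "('f::field \<Rightarrow> 'b::ab_group_add \<Rightarrow> 'b) \<Rightarrow> ('x \<Rightarrow> 'b set) \<Rightarrow> 'x set \<Rightarrow> bool" where
  "internal_direct_sum s W Idx \<longleftrightarrow>
     (\<forall>\<alpha>\<in>Idx. module.subspace s (W \<alpha>)) \<and>
     module.span s (\<Union>\<alpha>\<in>Idx. W \<alpha>) = UNIV \<and>
     (\<forall>\<alpha>\<in>Idx. W \<alpha> \<inter> module.span s (\<Union>\<beta>\<in>Idx - {\<alpha>}. W \<beta>) = {0})"

locale nmod_data =
  fixes n :: nat and k :: nat
    and sA :: "'f::field \<Rightarrow> 'a::ab_group_add \<Rightarrow> 'a"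
    and sV :: "'f \<Rightarrow> 'v::ab_group_add \<Rightarrow> 'v"
    and prodA :: "'a list \<Rightarrow> 'a"
    and act :: "(nat \<Rightarrow> nat) \<Rightarrow> 'v list \<Rightarrow> 'a list \<Rightarrow> 'v"
        \<comment> \<open>act s ys xs = [y_1,...,y_k,x_(k+1),...,x_n]_s\<close>
    and e :: "'j \<Rightarrow> 'a"
    and v :: "'i \<Rightarrow> 'v"
begin

definition setting :: bool where
  "setting \<longleftrightarrow>
     2 \<le> n \<and> 1 \<le> k \<and> k \<le> n \<and>
     vector_space sA \<and> vector_space sV \<and>
     multilinear sA sA n prodA \<and>
     (\<forall>\<sigma>. \<sigma> permutes {0..<n} \<longrightarrow>
        (\<forall>xs. length xs = n - k \<longrightarrow> multilinear sV sV k (\<lambda>ys. act \<sigma> ys xs)) \<and>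
        (\<forall>ys. length ys = k \<longrightarrow> multilinear sA sV (n - k) (\<lambda>xs. act \<sigma> ys xs))) \<and>
     inj e \<and> \<not> module.dependent sA (range e) \<and> module.span sA (range e) = UNIV \<and>
     inj v \<and> \<not> module.dependent sV (range v) \<and> module.span sV (range v) = UNIV \<and>
     (\<forall>js. length js = n \<longrightarrow> (\<exists>j. prodA (map e js) \<in> module.span sA {e j})) \<and>
     (\<forall>\<sigma> is js. \<sigma> permutes {0..<n} \<longrightarrow> length is = k \<longrightarrow> length js = n - k \<longrightarrow>
        (\<exists>r. act \<sigma> (map v is) (map e js) \<in> module.span sV {v r}))"

text \<open>Elements of the index set K = I \<union> J (Inl for I, Inr for J) and the basis
  B'' = B \<union> B' of A \<oplus> V (modelled as 'a \<times> 'v).\<close>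
definition ub :: "'i + 'j \<Rightarrow> 'a \<times> 'v" where
  "ub x = (case x of Inl i \<Rightarrow> (0, v i) | Inr j \<Rightarrow> (e j, 0))"

text \<open>The product [[u_x1,...,u_xn]]_s of basis elements of A \<oplus> V.  The l-th argument
  is placed in position s(l); an argument list that is not already ordered
  "V-arguments first" is reordered by the stable sorting permutation p
  (V-positions first, then A-positions), using [[u]]_s = [[u o p]]_(s o p).\<close>
definition bprod :: "(nat \<Rightarrow> nat) \<Rightarrow> ('i + 'j) list \<Rightarrow> 'a \<times> 'v" where
  "bprod \<sigma> xs =
    (let P = filter (\<lambda>l. isl (xs ! l)) [0..<n];
         Q = filter (\<lambda>l. \<not> isl (xs ! l)) [0..<n];
         \<pi> = (\<lambda>m. if m < n then (P @ Q) ! m else m)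
     in if length P = 0
        then (prodA (map (\<lambda>p. e (projr (xs ! inv \<sigma> p))) [0..<n]), 0)
        else if length P = k
        then (0, act (\<sigma> \<circ> \<pi>) (map (\<lambda>l. v (projl (xs ! l))) P)
                                (map (\<lambda>l. e (projr (xs ! l))) Q))
        else (0, 0))"

definition a_set :: "(nat \<Rightarrow> nat) \<Rightarrow> ('i + 'j) list \<Rightarrow> ('i + 'j) set" where
  "a_set \<sigma> xs = {r. bprod \<sigma> xs \<noteq> (0, 0) \<and>
       (\<exists>c. bprod \<sigma> xs = (sA c (fst (ub r)), sV c (snd (ub r))))}"

definition b_set :: "(nat \<Rightarrow> nat) \<Rightarrow> ('i + 'j) \<Rightarrow> ('i + 'j) list \<Rightarrow> ('i + 'j) set" where
  "b_set \<sigma> x zs = {x'. a_set \<sigma> (x' # zs) = {x}}"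

text \<open>Z \<in> (K \<union> K-bar)^(n-1): Inl z stands for z \<in> K, Inr z for the barred symbol.\<close>
definition mu :: "('i + 'j) \<Rightarrow> (('i + 'j) + ('i + 'j)) list \<Rightarrow> ('i + 'j) set" where
  "mu x Z =
    (if length Z \<noteq> n - 1 then {}
     else if list_all isl Z then (\<Union>\<sigma>\<in>{\<sigma>. \<sigma> permutes {0..<n}}. a_set \<sigma> (x # map projl Z))
     else if list_all (\<lambda>z. \<not> isl z) Z
       then (\<Union>\<sigma>\<in>{\<sigma>. \<sigma> permutes {0..<n}}. b_set \<sigma> x (map projr Z))
     else {})"

definition phi :: "('i + 'j) set \<Rightarrow> (('i + 'j) + ('i + 'j)) list \<Rightarrow> ('i + 'j) set" where
  "phi S Z = (\<Union>x\<in>S. mu x Z)"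

definition connected :: "('i + 'j) \<Rightarrow> ('i + 'j) \<Rightarrow> bool" where
  "connected x x' \<longleftrightarrow> x = x' \<or>
     (\<exists>Zs. Zs \<noteq> [] \<and> (\<forall>Z\<in>set Zs. length Z = n - 1) \<and>
        (\<forall>m<length Zs. foldl phi {x} (take m Zs) \<noteq> {}) \<and>
        x' \<in> foldl phi {x} Zs)"

definition Omega :: "('i + 'j) set set" where
  "Omega = UNIV // {(x, y). connected x y}"

definition V_part :: "('i + 'j) set \<Rightarrow> 'v set" where
  "V_part \<alpha> = module.span sV {v i | i. Inl i \<in> \<alpha>}"

definition A_part :: "('i + 'j) set \<Rightarrow> 'a set" where
  "A_part \<alpha> = module.span sA {e j | j. Inr j \<in> \<alpha>}"

definition Omega_V :: "('i + 'j) set set" where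
  "Omega_V = {\<alpha>\<in>Omega. V_part \<alpha> \<noteq> {0}}"

definition Omega_A :: "('i + 'j) set set" where
  "Omega_A = {\<alpha>\<in>Omega. A_part \<alpha> \<noteq> {0}}"

text \<open>P(S_1,...,S_k; T_(k+1),...,T_n), with Ss the list of the S_l and Ts of the T_l.\<close>
definition Pspan :: "'v set list \<Rightarrow> 'a set list \<Rightarrow> 'v set" where
  "Pspan Ss Ts = module.span sV
     {act \<sigma> ys xs | \<sigma> ys xs. \<sigma> permutes {0..<n} \<and>
        length ys = length Ss \<and> length xs = length Ts \<and>
        (\<forall>l<length Ss. ys ! l \<in> Ss ! l) \<and> (\<forall>l<length Ts. xs ! l \<in> Ts ! l)}"

definition k_submodule :: "'v set \<Rightarrow> bool" where
  "k_submodule W \<longleftrightarrow> module.subspace sV W \<and>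
     (\<forall>\<sigma> ys xs. \<sigma> permutes {0..<n} \<longrightarrow> length ys = k \<longrightarrow> length xs = n - k \<longrightarrow>
        hd ys \<in> W \<longrightarrow> act \<sigma> ys xs \<in> W)"

definition ideal_A :: "'a set \<Rightarrow> bool" where
  "ideal_A W \<longleftrightarrow> module.subspace sA W \<and>
     (\<forall>as. length as = n \<longrightarrow> (\<exists>l<n. as ! l \<in> W) \<longrightarrow> prodA as \<in> W)"

definition inherited_basis_V :: "'v set \<Rightarrow> bool" where
  "inherited_basis_V W \<longleftrightarrow> (\<exists>S\<subseteq>range v. \<not> module.dependent sV S \<and> module.span sV S = W)"

definition inherited_basis_A :: "'a set \<Rightarrow> bool" where
  "inherited_basis_A W \<longleftrightarrow> (\<exists>S\<subseteq>range e. \<not> module.dependent sA S \<and> module.span sA S = W)"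

definition Omega'_V :: "('i + 'j) set set" where
  "Omega'_V = {\<alpha>\<in>Omega_V.
      Pspan (V_part \<alpha> # replicate (k - 1) UNIV) (replicate (n - k) UNIV) \<noteq> {0}}"

definition Omega'_A :: "('i + 'j) set set" where
  "Omega'_A = {\<beta>\<in>Omega_A.
      Pspan (replicate k UNIV) (A_part \<beta> # replicate (n - k - 1) UNIV) \<noteq> {0}}"

end

end

theory Submission
  imports Defs
begin

text \<open>Connection is the equivalence closure of the step relation "y indexes the basis element
  that a product of basis elements involving x is a nonzero multiple of". Hence a product
  with one argument in the span of a class lands in the span of that class; multilinearity
  extends this from basis elements to V_\<alpha> and A_\<beta>, giving k-submodules and ideals, and the
  direct sums come from partitioning the bases along the classes. A nonzero product
  [v_i1, ..., e_j(k+1), ...] links both i1 and j(k+1) to the index of its value, so they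
  lie in one class. Therefore \<Omega>'_V = \<Omega>'_A, a class \<alpha> in it pairs nontrivially only with
  A_\<alpha>, and the identity is the required bijection.\<close>

section \<open>Multilinear maps and bases\<close>

lemma multilinear_slot_subspace:
  assumes "vector_space s" "vector_space t" and ml: "multilinear s t m f"
    and T: "module.subspace t T" and ws: "length ws = m" and p: "p < m"
  shows "module.subspace s {x. f (ws[p := x]) \<in> T}"
proof -
  interpret s: vector_space s by fact
  interpret t: vector_space t by fact
  have add: "f (ws[p := x + y]) = f (ws[p := x]) + f (ws[p := y])"
    and scale: "f (ws[p := s c x]) = t c (f (ws[p := x]))" for x y c
    using ml ws p unfolding multilinear_def by blast+
  have "f (ws[p := 0]) = t 0 (f (ws[p := 0]))"
    using scale[of 0 0] by simp
  then have "f (ws[p := 0]) = 0" by simp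
  then show ?thesis
    using add scale t.subspace_0[OF T] t.subspace_add[OF T] t.subspace_scale[OF T]
    by (intro s.subspaceI) auto
qed

text \<open>The slots are converted from generators to spans one at a time.\<close>
lemma multilinear_span_closed:
  assumes vs: "vector_space s" and vt: "vector_space t" and ml: "multilinear s t m f"
    and T: "module.subspace t T"
    and gen: "\<And>ws. length ws = m \<Longrightarrow> \<forall>i<m. ws ! i \<in> S i \<Longrightarrow> f ws \<in> T"
    and xs: "length xs = m" "\<forall>i<m. xs ! i \<in> module.span s (S i)"
  shows "f xs \<in> T"
proof -
  interpret s: vector_space s by fact
  have "f ws \<in> T"
    if "p \<le> m" "length ws = m" "\<forall>i<p. ws ! i \<in> s.span (S i)" "\<forall>i. p \<le> i \<and> i < m \<longrightarrow> ws ! i \<in> S i"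
    for p ws
    using that
  proof (induction p arbitrary: ws)
    case 0
    then show ?case using gen by auto
  next
    case (Suc p)
    have "s.subspace {x. f (ws[p := x]) \<in> T}"
      using multilinear_slot_subspace[OF vs vt ml T] Suc.prems by auto
    moreover have "f (ws[p := x]) \<in> T" if "x \<in> S p" for x
      using Suc.IH[of "ws[p := x]"] Suc.prems that by (auto simp: nth_list_update)
    moreover have "ws ! p \<in> s.span (S p)" using Suc.prems by auto
    ultimately show ?case
      using s.span_induct[of "ws ! p" "S p" "\<lambda>x. f (ws[p := x]) \<in> T"] by simp
  qed
  from this[of m xs] show ?thesis using xs by force
qed

lemma multilinear_basis_closed:
  assumes "vector_space s" "vector_space t" "multilinear s t m f" "module.subspace t T"
    and b: "inj b"
    and gen: "\<And>js. length js = m \<Longrightarrow> \<forall>i<m. js ! i \<in> J i \<Longrightarrow> f (map b js) \<in> T"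
    and xs: "length xs = m" "\<forall>i<m. xs ! i \<in> module.span s (b ` J i)"
  shows "f xs \<in> T"
proof (rule multilinear_span_closed[OF assms(1-4) _ xs])
  fix ws assume ws: "length ws = m" "\<forall>i<m. ws ! i \<in> b ` J i"
  then have "ws = map b (map (inv b) ws)"
    by (auto intro!: nth_equalityI simp: f_inv_into_f)
  moreover have "f (map b (map (inv b) ws)) \<in> T"
    using ws b by (intro gen) auto
  ultimately show "f ws \<in> T" by simp
qed

lemma (in module) independent_span_disjoint_eq_0:
  assumes "independent B" "S1 \<subseteq> B" "S2 \<subseteq> B" "S1 \<inter> S2 = {}"
    and x1: "x \<in> span S1" and x2: "x \<in> span S2"
  shows "x = 0"
proof -
  have i1: "independent S1" and i2: "independent S2" using assms independent_mono by blast+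
  have xB: "x \<in> span B" using x1 span_mono assms(2) by blast
  have r1: "representation B x = representation S1 x"
    by (rule representation_eqI[OF assms(1) xB])
       (use representation_ne_zero[of S1 x] assms(2) finite_representation[of S1 x]
            sum_nonzero_representation_eq[OF i1 x1] in auto)
  have r2: "representation B x = representation S2 x"
    by (rule representation_eqI[OF assms(1) xB])
       (use representation_ne_zero[of S2 x] assms(3) finite_representation[of S2 x]
            sum_nonzero_representation_eq[OF i2 x2] in auto)
  have "{b. representation B x b \<noteq> 0} = {}"
    using r1 r2 representation_ne_zero[of S1 x] representation_ne_zero[of S2 x] assms(4) by auto
  then show ?thesis using sum_nonzero_representation_eq[OF assms(1) xB] by simp
qed

lemma (in module) span_eq_zero_iff: "span S = {0} \<longleftrightarrow> S \<subseteq> {0}"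
  using span_superset[of S] span_minimal[of S "{0}"] span_zero[of S] by auto

lemma (in vector_space) scale_basis_eq_imp_eq:
  assumes B: "independent B" "b \<in> B" "b' \<in> B" and eq: "scale c b = scale c' b'" and c': "c' \<noteq> 0"
  shows "b = b'"
proof (rule ccontr)
  assume "b \<noteq> b'"
  moreover have "scale c b \<in> span {b'}" unfolding eq by (simp add: span_base span_scale)
  ultimately have "scale c b = 0"
    using B by (intro independent_span_disjoint_eq_0[OF B(1), of "{b}" "{b'}"])
      (auto simp: span_base span_scale)
  moreover have "b' \<noteq> 0" using B dependent_zero by blast
  ultimately show False using eq c' by simp
qed

lemma (in vector_space) internal_direct_sum_basis_partition:
  assumes ind: "independent (range b)" and sp: "span (range b) = UNIV" and b: "inj b"
    and g: "inj g"
    and disj: "\<And>\<alpha> \<beta> x. \<alpha> \<in> Om \<Longrightarrow> \<beta> \<in> Om \<Longrightarrow> x \<in> \<alpha> \<Longrightarrow> x \<in> \<beta> \<Longrightarrow> \<alpha> = \<beta>"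
    and cover: "\<And>i. \<exists>\<alpha>\<in>Om. g i \<in> \<alpha>"
    and W: "\<And>\<alpha>. W \<alpha> = span {b i | i. g i \<in> \<alpha>}"
  shows "internal_direct_sum scale W {\<alpha>\<in>Om. W \<alpha> \<noteq> {0}}"
  unfolding internal_direct_sum_def
proof (intro conjI ballI)
  let ?Idx = "{\<alpha>\<in>Om. W \<alpha> \<noteq> {0}}"
  show "subspace (W \<alpha>)" for \<alpha> unfolding W by simp
  have "b i \<in> (\<Union>\<alpha>\<in>?Idx. W \<alpha>)" for i
  proof -
    obtain \<alpha> where \<alpha>: "\<alpha> \<in> Om" "g i \<in> \<alpha>" using cover by blast
    have "b i \<in> W \<alpha>" unfolding W using \<alpha> by (auto intro: span_base)
    moreover have "b i \<noteq> 0" using ind dependent_zero by force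
    ultimately show ?thesis using \<alpha> by auto
  qed
  then have "span (range b) \<subseteq> span (\<Union>\<alpha>\<in>?Idx. W \<alpha>)" by (intro span_mono) auto
  then show "span (\<Union>\<alpha>\<in>?Idx. W \<alpha>) = UNIV" using sp by auto
  fix \<alpha> assume \<alpha>: "\<alpha> \<in> ?Idx"
  let ?G1 = "{b i | i. g i \<in> \<alpha>}"
  let ?G2 = "{b i | i. \<exists>\<beta>\<in>?Idx - {\<alpha>}. g i \<in> \<beta>}"
  have "span (\<Union>\<beta>\<in>?Idx - {\<alpha>}. W \<beta>) \<subseteq> span ?G2"
    unfolding W by (intro span_minimal UN_least span_mono) auto
  moreover have "?G1 \<inter> ?G2 = {}"
    using \<alpha> disj b by (auto dest: injD)
  ultimately have "x = 0" if "x \<in> W \<alpha>" "x \<in> span (\<Union>\<beta>\<in>?Idx - {\<alpha>}. W \<beta>)" for x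
    using that W by (intro independent_span_disjoint_eq_0[OF ind, of ?G1 ?G2]) auto
  then show "W \<alpha> \<inter> span (\<Union>\<beta>\<in>?Idx - {\<alpha>}. W \<beta>) = {0}"
    unfolding W by (auto simp: span_zero)
qed

lemma map_nth_filter:
  "map (\<lambda>l. g (xs ! l)) (filter (\<lambda>l. p (xs ! l)) [0..<length xs]) = map g (filter p xs)"
proof (induction xs rule: rev_induct)
  case (snoc x xs)
  have "filter (\<lambda>l. p ((xs @ [x]) ! l)) [0..<length xs] = filter (\<lambda>l. p (xs ! l)) [0..<length xs]"
    by (rule filter_cong) (auto simp: nth_append)
  moreover have "map (\<lambda>l. g ((xs @ [x]) ! l)) (filter (\<lambda>l. p (xs ! l)) [0..<length xs])
      = map (\<lambda>l. g (xs ! l)) (filter (\<lambda>l. p (xs ! l)) [0..<length xs])"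
    by (rule map_cong) (auto simp: nth_append)
  ultimately show ?case using snoc by simp
qed simp

lemma permutes_nth_of_distinct:
  assumes "distinct L" "set L = {0..<n}"
  shows "(\<lambda>m. if m < n then L ! m else m) permutes {0..<n}"
proof (rule bij_imp_permutes)
  have "length L = n" using assms distinct_card by fastforce
  moreover have "bij_betw ((!) L) {..<length L} (set L)" by (rule bij_betw_nth) (use assms in auto)
  ultimately have "bij_betw ((!) L) {0..<n} {0..<n}" using assms by (simp add: lessThan_atLeast0)
  then show "bij_betw (\<lambda>m. if m < n then L ! m else m) {0..<n} {0..<n}"
    by (rule bij_betw_cong[THEN iffD1, rotated]) auto
qed auto

section \<open>Connection as the closure of a step relation\<close>

locale nmod = nmod_data n k sA sV prodA act e v
  for n k :: nat and sA :: "'f::field \<Rightarrow> 'a::ab_group_add \<Rightarrow> 'a"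
    and sV :: "'f \<Rightarrow> 'v::ab_group_add \<Rightarrow> 'v" and prodA act and e :: "'j \<Rightarrow> 'a" and v :: "'i \<Rightarrow> 'v" +
  assumes setting: setting and k_le: "k \<le> n - 1"
begin

sublocale A: vector_space sA using setting unfolding setting_def by blast
sublocale V: vector_space sV using setting unfolding setting_def by blast

lemma n_ge_2: "2 \<le> n" and k_ge_1: "1 \<le> k" and n_minus_k_pos: "0 < n - k"
  using setting k_le unfolding setting_def by auto

lemma multilinear_prodA: "multilinear sA sA n prodA"
  using setting unfolding setting_def by blast

lemma multilinear_act_V:
  "\<sigma> permutes {0..<n} \<Longrightarrow> length xs = n - k \<Longrightarrow> multilinear sV sV k (\<lambda>ys. act \<sigma> ys xs)"
  using setting unfolding setting_def by blast

lemma multilinear_act_A: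
  "\<sigma> permutes {0..<n} \<Longrightarrow> length ys = k \<Longrightarrow> multilinear sA sV (n - k) (\<lambda>xs. act \<sigma> ys xs)"
  using setting unfolding setting_def by blast

lemma inj_e: "inj e" and independent_e: "A.independent (range e)"
  and span_e: "A.span (range e) = UNIV"
  and inj_v: "inj v" and independent_v: "V.independent (range v)"
  and span_v: "V.span (range v) = UNIV"
  using setting unfolding setting_def by auto

lemma prodA_basis:
  assumes "length js = n" obtains c j where "prodA (map e js) = sA c (e j)"
  using setting assms unfolding setting_def A.span_singleton by blast

lemma act_basis:
  assumes "\<sigma> permutes {0..<n}" "length is = k" "length js = n - k"
  obtains c r where "act \<sigma> (map v is) (map e js) = sV c (v r)"
  using setting assms unfolding setting_def V.span_singleton by blast

lemma v_neq_0: "v i \<noteq> 0" using independent_v V.dependent_zero by force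
lemma e_neq_0: "e j \<noteq> 0" using independent_e A.dependent_zero by force

lemma scale_v_eq_imp_eq: "sV c (v i) = sV c' (v i') \<Longrightarrow> c' \<noteq> 0 \<Longrightarrow> i = i'"
  using V.scale_basis_eq_imp_eq[OF independent_v] inj_v by (blast dest: injD)

lemma scale_e_eq_imp_eq: "sA c (e j) = sA c' (e j') \<Longrightarrow> c' \<noteq> 0 \<Longrightarrow> j = j'"
  using A.scale_basis_eq_imp_eq[OF independent_e] inj_e by (blast dest: injD)

lemma a_set_singleton:
  assumes r: "r \<in> a_set \<sigma> xs" shows "a_set \<sigma> xs = {r}"
proof -
  have "r' = r" if r': "r' \<in> a_set \<sigma> xs" for r'
  proof -
    obtain c where c: "bprod \<sigma> xs = (sA c (fst (ub r)), sV c (snd (ub r)))"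
      and nz: "bprod \<sigma> xs \<noteq> (0, 0)"
      using r unfolding a_set_def by blast
    obtain c' where c': "bprod \<sigma> xs = (sA c' (fst (ub r')), sV c' (snd (ub r')))"
      using r' unfolding a_set_def by blast
    show ?thesis using nz c c'
      by (cases r; cases r') (auto simp: ub_def dest: scale_v_eq_imp_eq scale_e_eq_imp_eq)
  qed
  then show ?thesis using r by blast
qed

definition link :: "('i + 'j) rel" where
  "link = {(x, y). \<exists>Z. length Z = n - 1 \<and> y \<in> mu x Z}"

lemma mu_length: "y \<in> mu x Z \<Longrightarrow> length Z = n - 1"
  unfolding mu_def by (auto split: if_splits)

text \<open>Swapping barred and unbarred symbols turns an a-step into a b-step and back.\<close>
lemma sym_link: "sym link"
proof (rule symI)
  fix x y assume "(x, y) \<in> link"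
  then obtain Z where len: "length Z = n - 1" and y: "y \<in> mu x Z" unfolding link_def by auto
  define Z' where "Z' = map (case_sum Inr Inl) Z"
  have len': "length Z' = n - 1" using len unfolding Z'_def by simp
  have "Z \<noteq> []" using len n_ge_2 by auto
  show "(y, x) \<in> link"
  proof (cases "list_all isl Z")
    case True
    then obtain \<sigma> where \<sigma>: "\<sigma> permutes {0..<n}" and "y \<in> a_set \<sigma> (x # map projl Z)"
      using y len unfolding mu_def by auto
    then have "x \<in> b_set \<sigma> y (map projl Z)" unfolding b_set_def using a_set_singleton by simp
    moreover have "\<not> list_all isl Z'" "list_all (\<lambda>z. \<not> isl z) Z'"
      using \<open>Z \<noteq> []\<close> True unfolding Z'_def by (auto simp: list_all_iff neq_Nil_conv split: sum.splits)
    moreover have "map projr Z' = map projl Z"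
      using True unfolding Z'_def by (induction Z) (auto split: sum.splits)
    ultimately have "x \<in> mu y Z'" unfolding mu_def using \<sigma> len' by auto
    then show ?thesis unfolding link_def using len' by auto
  next
    case False
    then have nl: "list_all (\<lambda>z. \<not> isl z) Z" using y unfolding mu_def by (auto split: if_splits)
    then obtain \<sigma> where \<sigma>: "\<sigma> permutes {0..<n}" and "y \<in> b_set \<sigma> x (map projr Z)"
      using y len False unfolding mu_def by auto
    then have "x \<in> a_set \<sigma> (y # map projr Z)" unfolding b_set_def by simp
    moreover have "list_all isl Z'" using nl unfolding Z'_def by (auto simp: list_all_iff split: sum.splits)
    moreover have "map projl Z' = map projr Z"
      using nl unfolding Z'_def by (induction Z) (auto split: sum.splits)
    ultimately have "x \<in> mu y Z'" unfolding mu_def using \<sigma> len' by auto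
    then show ?thesis unfolding link_def using len' by auto
  qed
qed

lemma foldl_phi_imp_link_rtrancl: "y \<in> foldl phi {x} Zs \<Longrightarrow> (x, y) \<in> link\<^sup>*"
proof (induction Zs arbitrary: y rule: rev_induct)
  case (snoc Z Zs)
  then obtain w where "w \<in> foldl phi {x} Zs" "y \<in> mu w Z" unfolding phi_def by auto
  then show ?case using snoc.IH mu_length unfolding link_def by (blast intro: rtrancl_into_rtrancl)
qed simp

lemma link_trancl_imp_foldl_phi:
  "(x, y) \<in> link\<^sup>+ \<Longrightarrow> \<exists>Zs. Zs \<noteq> [] \<and> (\<forall>Z\<in>set Zs. length Z = n - 1) \<and>
     (\<forall>m<length Zs. foldl phi {x} (take m Zs) \<noteq> {}) \<and> y \<in> foldl phi {x} Zs"
proof (induction rule: trancl_induct)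
  case (base y)
  then obtain Z where "length Z = n - 1" "y \<in> mu x Z" unfolding link_def by auto
  then show ?case by (intro exI[of _ "[Z]"]) (auto simp: phi_def)
next
  case (step y z)
  then obtain Zs where Zs: "Zs \<noteq> []" "\<forall>Z\<in>set Zs. length Z = n - 1"
     "\<forall>m<length Zs. foldl phi {x} (take m Zs) \<noteq> {}" "y \<in> foldl phi {x} Zs" by blast
  obtain Z where Z: "length Z = n - 1" "z \<in> mu y Z" using step unfolding link_def by auto
  have "foldl phi {x} (take m (Zs @ [Z])) \<noteq> {}" if "m < Suc (length Zs)" for m
    using Zs that by (cases "m = length Zs") auto
  moreover have "z \<in> foldl phi {x} (Zs @ [Z])" using Zs Z by (auto simp: phi_def)
  ultimately show ?case using Zs Z by (intro exI[of _ "Zs @ [Z]"]) auto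
qed

lemma connected_iff_link: "connected x y \<longleftrightarrow> (x, y) \<in> link\<^sup>*"
proof
  assume "connected x y"
  then show "(x, y) \<in> link\<^sup>*" unfolding connected_def using foldl_phi_imp_link_rtrancl by blast
next
  assume "(x, y) \<in> link\<^sup>*"
  then have "x = y \<or> (x, y) \<in> link\<^sup>+" by (meson rtranclD)
  then show "connected x y" unfolding connected_def using link_trancl_imp_foldl_phi by blast
qed

lemma equiv_link: "equiv UNIV (link\<^sup>*)"
  by (rule equivI) (auto simp: refl_on_def sym_rtrancl[OF sym_link] intro: trans_rtrancl)

lemma Omega_eq: "Omega = UNIV // link\<^sup>*"
proof -
  have "{(x, y). connected x y} = link\<^sup>*" using connected_iff_link by auto
  then show ?thesis unfolding Omega_def by simp
qed

lemma Omega_closed: "\<alpha> \<in> Omega \<Longrightarrow> x \<in> \<alpha> \<Longrightarrow> (x, y) \<in> link\<^sup>* \<Longrightarrow> y \<in> \<alpha>"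
  unfolding Omega_eq by (auto elim!: quotientE intro: rtrancl_trans)

lemma Omega_disjoint: "\<alpha> \<in> Omega \<Longrightarrow> \<beta> \<in> Omega \<Longrightarrow> x \<in> \<alpha> \<Longrightarrow> x \<in> \<beta> \<Longrightarrow> \<alpha> = \<beta>"
  unfolding Omega_eq using quotient_disj[OF equiv_link] by blast

lemma Omega_cover: "\<exists>\<alpha>\<in>Omega. x \<in> \<alpha>"
  unfolding Omega_eq by (auto intro: quotientI)

text \<open>This is the permutation \<pi> in the definition of bprod.\<close>
definition front_perm :: "('i + 'j) list \<Rightarrow> nat \<Rightarrow> nat" where
  "front_perm xs = (\<lambda>m. if m < n then
     (filter (\<lambda>l. isl (xs ! l)) [0..<n] @ filter (\<lambda>l. \<not> isl (xs ! l)) [0..<n]) ! m else m)"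

lemma front_perm_permutes: "front_perm xs permutes {0..<n}"
  unfolding front_perm_def by (rule permutes_nth_of_distinct) auto

lemma bprod_k_V_arguments:
  assumes "length xs = n" "length (filter isl xs) = k"
  shows "bprod \<sigma> xs = (0, act (\<sigma> \<circ> front_perm xs) (map (v \<circ> projl) (filter isl xs))
                                  (map (e \<circ> projr) (filter (\<lambda>x. \<not> isl x) xs)))"
proof -
  have P: "map (\<lambda>l. v (projl (xs ! l))) (filter (\<lambda>l. isl (xs ! l)) [0..<n])
      = map (v \<circ> projl) (filter isl xs)"
    using map_nth_filter[of "v \<circ> projl" xs isl] assms(1) by (simp add: o_def)
  have Q: "map (\<lambda>l. e (projr (xs ! l))) (filter (\<lambda>l. \<not> isl (xs ! l)) [0..<n])
      = map (e \<circ> projr) (filter (\<lambda>x. \<not> isl x) xs)"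
    using map_nth_filter[of "e \<circ> projr" xs "\<lambda>x. \<not> isl x"] assms(1) by (simp add: o_def)
  have "length (filter (\<lambda>l. isl (xs ! l)) [0..<n]) = k"
    using arg_cong[OF P, of length] assms by simp
  then show ?thesis
    unfolding bprod_def Let_def using k_ge_1 P Q by (simp add: front_perm_def)
qed

text \<open>Composing \<sigma> with the inverse of front_perm xs realises the product as a bprod of xs,
  whatever the arrangement xs of its arguments.\<close>
lemma act_basis_link:
  assumes \<sigma>: "\<sigma> permutes {0..<n}" and "length is = k" "length js = n - k"
    and eq: "act \<sigma> (map v is) (map e js) = sV c (v r)" and c: "c \<noteq> 0"
    and xs: "length xs = n" "filter isl xs = map Inl is" "filter (\<lambda>x. \<not> isl x) xs = map Inr js"
  shows "(hd xs, Inl r) \<in> link"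
proof -
  have \<pi>: "front_perm xs permutes {0..<n}" by (rule front_perm_permutes)
  define \<sigma>' where "\<sigma>' = \<sigma> \<circ> inv (front_perm xs)"
  have \<sigma>': "\<sigma>' permutes {0..<n}"
    unfolding \<sigma>'_def by (rule permutes_compose[OF permutes_inv[OF \<pi>] \<sigma>])
  have "\<sigma>' \<circ> front_perm xs = \<sigma>"
    unfolding \<sigma>'_def comp_assoc permutes_inv_o(2)[OF \<pi>] by simp
  then have "bprod \<sigma>' xs = (0, sV c (v r))"
    using bprod_k_V_arguments[of xs \<sigma>'] assms by (simp add: o_def)
  then have "Inl r \<in> a_set \<sigma>' xs"
    unfolding a_set_def using c v_neq_0 by (auto simp: ub_def intro!: exI[of _ c])
  moreover have "xs \<noteq> []" using xs n_ge_2 by auto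
  ultimately have "Inl r \<in> mu (hd xs) (map Inl (tl xs))"
    unfolding mu_def using xs \<sigma>' by (auto simp: list_all_iff o_def)
  then show ?thesis unfolding link_def using xs by force
qed

lemma prodA_basis_link:
  assumes js: "length js = n" and eq: "prodA (map e js) = sA c (e j)" and c: "c \<noteq> 0"
    and l: "l < n"
  shows "(Inr (js ! l), Inr j) \<in> link"
proof -
  \<comment> \<open>the transposition moves js ! l into the first slot, the one mu starts from\<close>
  define \<tau> where "\<tau> = transpose 0 l"
  have \<tau>: "\<tau> permutes {0..<n}" unfolding \<tau>_def using l by (intro permutes_swap_id) auto
  define xs :: "('i + 'j) list" where "xs = map (\<lambda>p. Inr (js ! \<tau> p)) [0..<n]"
  have "filter (\<lambda>l. isl (xs ! l)) [0..<n] = []"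
    unfolding xs_def by (auto simp: filter_empty_conv)
  moreover have "\<tau> p < n" if "p < n" for p unfolding \<tau>_def using l that by (auto simp: transpose_def)
  then have "map (\<lambda>p. e (projr (xs ! inv \<tau> p))) [0..<n] = map e js"
    unfolding xs_def \<tau>_def using js by (auto intro!: nth_equalityI)
  ultimately have "bprod \<tau> xs = (sA c (e j), 0)"
    unfolding bprod_def Let_def using eq by simp
  then have "Inr j \<in> a_set \<tau> xs"
    unfolding a_set_def using c e_neq_0 by (auto simp: ub_def intro!: exI[of _ c])
  moreover have "length xs = n" "xs \<noteq> []" unfolding xs_def using n_ge_2 by auto
  ultimately have "Inr j \<in> mu (hd xs) (map Inl (tl xs))"
    unfolding mu_def using \<tau> by (auto simp: list_all_iff o_def)
  moreover have "hd xs = Inr (js ! l)" unfolding xs_def \<tau>_def using n_ge_2 by (simp add: hd_map)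
  ultimately show ?thesis unfolding link_def using \<open>length xs = n\<close> by force
qed

lemma act_basis_link_first:
  assumes "\<sigma> permutes {0..<n}" "length is = k" "length js = n - k"
    and "act \<sigma> (map v is) (map e js) = sV c (v r)" "c \<noteq> 0"
  shows "(Inl (is ! 0), Inl r) \<in> link"
proof -
  have "hd (map Inl is @ map Inr js) = Inl (is ! 0)"
    using assms(2) k_ge_1 by (cases "is") auto
  moreover have "(hd (map Inl is @ map Inr js), Inl r) \<in> link"
    by (rule act_basis_link[OF assms]) (use assms k_le in \<open>auto simp: filter_empty_conv\<close>)
  ultimately show ?thesis by simp
qed

lemma act_basis_link_A:
  assumes "\<sigma> permutes {0..<n}" "length is = k" "length js = n - k"
    and "act \<sigma> (map v is) (map e js) = sV c (v r)" "c \<noteq> 0"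
  shows "(Inr (js ! 0), Inl r) \<in> link"
proof -
  obtain j js' where js: "js = j # js'" using assms(3) n_minus_k_pos by (cases js) auto
  have "(hd (Inr j # map Inl is @ map Inr js'), Inl r) \<in> link"
    by (rule act_basis_link[OF assms]) (use assms k_le js in \<open>auto simp: filter_empty_conv\<close>)
  then show ?thesis using js by simp
qed

text \<open>This is why \<Omega>'_V = \<Omega>'_A.\<close>
lemma act_basis_neq_0_connected:
  assumes "\<sigma> permutes {0..<n}" "length is = k" "length js = n - k"
    and nz: "act \<sigma> (map v is) (map e js) \<noteq> 0"
  shows "(Inl (is ! 0), Inr (js ! 0)) \<in> link\<^sup>*"
proof -
  obtain c r where eq: "act \<sigma> (map v is) (map e js) = sV c (v r)"
    using act_basis[OF assms(1-3)] by metis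
  have "c \<noteq> 0" using nz eq by auto
  then have "(Inl (is ! 0), Inl r) \<in> link" "(Inl r, Inr (js ! 0)) \<in> link"
    using act_basis_link_first[OF assms(1-3) eq] act_basis_link_A[OF assms(1-3) eq] sym_link
    by (auto dest: symD)
  then show ?thesis by auto
qed

section \<open>The components V_\<alpha> and A_\<beta>\<close>

lemma act_basis_closed:
  assumes \<sigma>: "\<sigma> permutes {0..<n}" and T: "V.subspace T"
    and gen: "\<And>is js. length is = k \<Longrightarrow> length js = n - k \<Longrightarrow> is ! 0 \<in> I \<Longrightarrow> js ! 0 \<in> J \<Longrightarrow>
               act \<sigma> (map v is) (map e js) \<in> T"
    and ys: "length ys = k" "ys ! 0 \<in> V.span (v ` I)"
    and xs: "length xs = n - k" "xs ! 0 \<in> A.span (e ` J)"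
  shows "act \<sigma> ys xs \<in> T"
proof -
  let ?I = "\<lambda>i. if i = 0 then I else UNIV" and ?J = "\<lambda>i. if i = 0 then J else UNIV"
  have "act \<sigma> ys (map e js) \<in> T" if js: "length js = n - k" "\<forall>i<n - k. js ! i \<in> ?J i" for js
  proof (rule multilinear_basis_closed[OF V.vector_space_axioms V.vector_space_axioms
        multilinear_act_V[OF \<sigma>] T inj_v, of _ ?I])
    show "length (map e js) = n - k" "length ys = k" using js ys by simp_all
    show "\<forall>i<k. ys ! i \<in> V.span (v ` ?I i)" using ys span_v by simp
    fix "is" assume "is": "length is = k" "\<forall>i<k. is ! i \<in> ?I i"
    then show "act \<sigma> (map v is) (map e js) \<in> T"
      using "is"(2)[rule_format, of 0] js(2)[rule_format, of 0] js(1) k_ge_1 n_minus_k_pos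
      by (intro gen) auto
  qed
  then show ?thesis
    using multilinear_basis_closed[OF A.vector_space_axioms V.vector_space_axioms
        multilinear_act_A[OF \<sigma> ys(1)] T inj_e, of ?J xs] xs span_e
    by simp
qed

lemma prodA_basis_closed:
  assumes T: "A.subspace T" and l: "l < n"
    and gen: "\<And>js. length js = n \<Longrightarrow> js ! l \<in> J \<Longrightarrow> prodA (map e js) \<in> T"
    and as: "length as = n" "as ! l \<in> A.span (e ` J)"
  shows "prodA as \<in> T"
proof (rule multilinear_basis_closed[OF A.vector_space_axioms A.vector_space_axioms
      multilinear_prodA T inj_e, of "\<lambda>i. if i = l then J else UNIV"])
  show "\<forall>i<n. as ! i \<in> A.span (e ` (if i = l then J else UNIV))" using as span_e by simp
qed (use gen as l in auto)

lemma V_part_eq: "V_part \<alpha> = V.span (v ` {i. Inl i \<in> \<alpha>})"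
  unfolding V_part_def by (rule arg_cong[where f = V.span]) auto

lemma A_part_eq: "A_part \<alpha> = A.span (e ` {j. Inr j \<in> \<alpha>})"
  unfolding A_part_def by (rule arg_cong[where f = A.span]) auto

lemma internal_direct_sum_V_part: "internal_direct_sum sV V_part Omega_V"
  unfolding Omega_V_def
  by (rule V.internal_direct_sum_basis_partition[OF independent_v span_v inj_v, of Inl])
     (simp, metis Omega_disjoint, metis Omega_cover, simp add: V_part_def)

lemma internal_direct_sum_A_part: "internal_direct_sum sA A_part Omega_A"
  unfolding Omega_A_def
  by (rule A.internal_direct_sum_basis_partition[OF independent_e span_e inj_e, of Inr])
     (simp, metis Omega_disjoint, metis Omega_cover, simp add: A_part_def)

lemma inherited_basis_V_part: "inherited_basis_V (V_part \<alpha>)"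
  unfolding inherited_basis_V_def V_part_def
  by (rule exI[of _ "{v i | i. Inl i \<in> \<alpha>}"])
     (use V.independent_mono[OF independent_v, of "{v i | i. Inl i \<in> \<alpha>}"] in auto)

lemma inherited_basis_A_part: "inherited_basis_A (A_part \<alpha>)"
  unfolding inherited_basis_A_def A_part_def
  by (rule exI[of _ "{e j | j. Inr j \<in> \<alpha>}"])
     (use A.independent_mono[OF independent_e, of "{e j | j. Inr j \<in> \<alpha>}"] in auto)

lemma k_submodule_V_part:
  assumes \<alpha>: "\<alpha> \<in> Omega" shows "k_submodule (V_part \<alpha>)"
  unfolding k_submodule_def
proof (intro conjI allI impI)
  show "V.subspace (V_part \<alpha>)" unfolding V_part_def by simp
  fix \<sigma> ys and xs :: "'a list"
  assume \<sigma>: "\<sigma> permutes {0..<n}" and ys: "length ys = k" "hd ys \<in> V_part \<alpha>"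
    and xs: "length xs = n - k"
  show "act \<sigma> ys xs \<in> V_part \<alpha>"
  proof (rule act_basis_closed[OF \<sigma> _ _ ys(1) _ xs, of _ "{i. Inl i \<in> \<alpha>}" UNIV])
    fix "is" and js :: "'j list" assume lens: "length is = k" "length js = n - k" and i0: "is ! 0 \<in> {i. Inl i \<in> \<alpha>}"
    obtain c r where eq: "act \<sigma> (map v is) (map e js) = sV c (v r)"
      using act_basis[OF \<sigma> lens] by metis
    have "Inl r \<in> \<alpha>" if "c \<noteq> 0"
      using act_basis_link_first[OF \<sigma> lens eq that] Omega_closed[OF \<alpha>] i0 by blast
    then show "act \<sigma> (map v is) (map e js) \<in> V_part \<alpha>"
      unfolding eq V_part_def by (cases "c = 0") (auto intro: V.span_scale V.span_base V.span_zero)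
  next
    show "ys ! 0 \<in> V.span (v ` {i. Inl i \<in> \<alpha>})"
      using ys k_ge_1 by (cases ys) (auto simp: V_part_eq)
  qed (use span_e in \<open>auto simp: V_part_def\<close>)
qed

lemma ideal_A_part:
  assumes \<beta>: "\<beta> \<in> Omega" shows "ideal_A (A_part \<beta>)"
  unfolding ideal_A_def
proof (intro conjI allI impI)
  show "A.subspace (A_part \<beta>)" unfolding A_part_def by simp
  fix as assume as: "length as = n" "\<exists>l<n. as ! l \<in> A_part \<beta>"
  then obtain l where l: "l < n" "as ! l \<in> A.span (e ` {j. Inr j \<in> \<beta>})"
    using A_part_eq by auto
  show "prodA as \<in> A_part \<beta>"
  proof (rule prodA_basis_closed[OF _ l(1) _ as(1) l(2)])
    fix js assume js: "length js = n" "js ! l \<in> {j. Inr j \<in> \<beta>}"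
    obtain c j where eq: "prodA (map e js) = sA c (e j)" using prodA_basis[OF js(1)] by metis
    have "Inr j \<in> \<beta>" if "c \<noteq> 0"
      using prodA_basis_link[OF js(1) eq that l(1)] Omega_closed[OF \<beta>] js(2) by blast
    then show "prodA (map e js) \<in> A_part \<beta>"
      unfolding eq A_part_def by (cases "c = 0") (auto intro: A.span_scale A.span_base A.span_zero)
  qed (simp add: A_part_def)
qed

definition act_basis_neq_0 :: "'i set \<Rightarrow> 'j set \<Rightarrow> bool" where
  "act_basis_neq_0 I J \<longleftrightarrow> (\<exists>\<sigma> is js. \<sigma> permutes {0..<n} \<and> length is = k \<and> length js = n - k \<and>
      is ! 0 \<in> I \<and> js ! 0 \<in> J \<and> act \<sigma> (map v is) (map e js) \<noteq> 0)"

lemma act_eq_0_if_not_act_basis_neq_0: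
  assumes none: "\<not> act_basis_neq_0 I J" and \<sigma>: "\<sigma> permutes {0..<n}"
    and ys: "length ys = k" "ys ! 0 \<in> V.span (v ` I)"
    and xs: "length xs = n - k" "xs ! 0 \<in> A.span (e ` J)"
  shows "act \<sigma> ys xs = 0"
proof -
  have "act \<sigma> ys xs \<in> {0}"
  proof (rule act_basis_closed[OF \<sigma> V.subspace_single_0 _ ys xs])
    show "act \<sigma> (map v is) (map e js) \<in> {0}"
      if "length is = k" "length js = n - k" "is ! 0 \<in> I" "js ! 0 \<in> J" for "is" js
      using that none \<sigma> unfolding act_basis_neq_0_def by blast
  qed
  then show ?thesis by simp
qed

lemma Pspan_neq_0_iff:
  "Pspan (V.span (v ` I) # replicate (k - 1) UNIV) (A.span (e ` J) # replicate (n - k - 1) UNIV) \<noteq> {0}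
    \<longleftrightarrow> act_basis_neq_0 I J" (is "Pspan ?Ss ?Ts \<noteq> {0} \<longleftrightarrow> _")
proof -
  let ?G = "{act \<sigma> ys xs | \<sigma> ys xs. \<sigma> permutes {0..<n} \<and>
        length ys = length ?Ss \<and> length xs = length ?Ts \<and>
        (\<forall>l<length ?Ss. ys ! l \<in> ?Ss ! l) \<and> (\<forall>l<length ?Ts. xs ! l \<in> ?Ts ! l)}"
  have len: "length ?Ss = k" "length ?Ts = n - k" using k_ge_1 n_minus_k_pos by auto
  have "?G \<subseteq> {0} \<longleftrightarrow> \<not> act_basis_neq_0 I J"
  proof
    assume G: "?G \<subseteq> {0}"
    show "\<not> act_basis_neq_0 I J"
    proof
      assume "act_basis_neq_0 I J"
      then obtain \<sigma> "is" js where \<sigma>: "\<sigma> permutes {0..<n}" and lens: "length is = k" "length js = n - k"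
        and "is ! 0 \<in> I" "js ! 0 \<in> J" and nz: "act \<sigma> (map v is) (map e js) \<noteq> 0"
        unfolding act_basis_neq_0_def by blast
      then have "\<forall>l<length ?Ss. map v is ! l \<in> ?Ss ! l" "\<forall>l<length ?Ts. map e js ! l \<in> ?Ts ! l"
        using len by (auto simp: nth_Cons' intro: V.span_base A.span_base)
      then have "act \<sigma> (map v is) (map e js) \<in> ?G"
        unfolding mem_Collect_eq using \<sigma> lens len
        by (intro exI[of _ \<sigma>] exI[of _ "map v is"] exI[of _ "map e js"]) simp
      then show False using G nz by blast
    qed
  next
    assume none: "\<not> act_basis_neq_0 I J"
    show "?G \<subseteq> {0}"
    proof clarify
      fix \<sigma> ys xs assume \<sigma>: "\<sigma> permutes {0..<n}" and lens: "length ys = length ?Ss" "length xs = length ?Ts"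
        and ys: "\<forall>l<length ?Ss. ys ! l \<in> ?Ss ! l" and xs: "\<forall>l<length ?Ts. xs ! l \<in> ?Ts ! l"
      show "act \<sigma> ys xs = 0"
        using act_eq_0_if_not_act_basis_neq_0[OF none \<sigma>] ys[rule_format, of 0] xs[rule_format, of 0]
          lens len k_ge_1 n_minus_k_pos
        by simp
    qed
  qed
  moreover have "Pspan ?Ss ?Ts = {0} \<longleftrightarrow> ?G \<subseteq> {0}"
    unfolding Pspan_def by (rule V.span_eq_zero_iff)
  ultimately show ?thesis by simp
qed

lemma act_basis_neq_0_same_class:
  assumes \<alpha>: "\<alpha> \<in> Omega" and "\<sigma> permutes {0..<n}" "length is = k" "length js = n - k"
    and "act \<sigma> (map v is) (map e js) \<noteq> 0"
  shows "Inl (is ! 0) \<in> \<alpha> \<longleftrightarrow> Inr (js ! 0) \<in> \<alpha>"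
proof -
  have "(Inl (is ! 0), Inr (js ! 0)) \<in> link\<^sup>*" by (rule act_basis_neq_0_connected[OF assms(2-)])
  moreover from this have "(Inr (js ! 0), Inl (is ! 0)) \<in> link\<^sup>*"
    by (rule symD[OF sym_rtrancl[OF sym_link]])
  ultimately show ?thesis using Omega_closed[OF \<alpha>] by blast
qed

lemma act_basis_neq_0_class_iff:
  assumes \<alpha>: "\<alpha> \<in> Omega"
  shows "act_basis_neq_0 {i. Inl i \<in> \<alpha>} UNIV \<longleftrightarrow> act_basis_neq_0 {i. Inl i \<in> \<alpha>} {j. Inr j \<in> \<alpha>}"
    and "act_basis_neq_0 UNIV {j. Inr j \<in> \<alpha>} \<longleftrightarrow> act_basis_neq_0 {i. Inl i \<in> \<alpha>} {j. Inr j \<in> \<alpha>}"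
  unfolding act_basis_neq_0_def using act_basis_neq_0_same_class[OF \<alpha>] by blast+

lemma replicate_k_UNIV: "replicate k UNIV = V.span (range v) # replicate (k - 1) UNIV"
  using k_ge_1 span_v by (cases k) auto

lemma replicate_n_minus_k_UNIV: "replicate (n - k) UNIV = A.span (range e) # replicate (n - k - 1) UNIV"
  using n_minus_k_pos span_e by (cases "n - k") auto

lemma Omega'_V_eq: "Omega'_V = {\<alpha>\<in>Omega. act_basis_neq_0 {i. Inl i \<in> \<alpha>} {j. Inr j \<in> \<alpha>}}"
proof -
  have "V_part \<alpha> \<noteq> {0}" if "act_basis_neq_0 {i. Inl i \<in> \<alpha>} J" for \<alpha> J
    using that v_neq_0 unfolding act_basis_neq_0_def V_part_def by (blast intro: V.span_base)
  then show ?thesis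
    unfolding Omega'_V_def Omega_V_def V_part_eq replicate_n_minus_k_UNIV Pspan_neq_0_iff
    using act_basis_neq_0_class_iff(1) by (auto simp: V_part_eq)
qed

lemma Omega'_A_eq: "Omega'_A = {\<alpha>\<in>Omega. act_basis_neq_0 {i. Inl i \<in> \<alpha>} {j. Inr j \<in> \<alpha>}}"
proof -
  have "A_part \<alpha> \<noteq> {0}" if "act_basis_neq_0 I {j. Inr j \<in> \<alpha>}" for \<alpha> I
    using that e_neq_0 unfolding act_basis_neq_0_def A_part_def by (blast intro: A.span_base)
  then show ?thesis
    unfolding Omega'_A_def Omega_A_def A_part_eq replicate_k_UNIV Pspan_neq_0_iff
    using act_basis_neq_0_class_iff(2) by (auto simp: A_part_eq)
qed

lemma Pspan_V_part_A_part_neq_0_iff: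
  assumes "\<alpha> \<in> Omega" "\<beta> \<in> Omega"
  shows "Pspan (V_part \<alpha> # replicate (k - 1) UNIV) (A_part \<beta> # replicate (n - k - 1) UNIV) \<noteq> {0}
    \<longleftrightarrow> \<alpha> = \<beta> \<and> act_basis_neq_0 {i. Inl i \<in> \<alpha>} {j. Inr j \<in> \<alpha>}"
proof -
  have "\<alpha> = \<beta>" if "act_basis_neq_0 {i. Inl i \<in> \<alpha>} {j. Inr j \<in> \<beta>}"
    using that act_basis_neq_0_same_class[OF assms(1)] Omega_disjoint[OF assms(1,2)]
    unfolding act_basis_neq_0_def by blast
  then show ?thesis unfolding V_part_eq A_part_eq Pspan_neq_0_iff by blast
qed

end

theorem mainTheorem12:
  fixes n k :: nat
    and sA :: "'f::field \<Rightarrow> 'a::ab_group_add \<Rightarrow> 'a"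
    and sV :: "'f \<Rightarrow> 'v::ab_group_add \<Rightarrow> 'v"
    and prodA :: "'a list \<Rightarrow> 'a"
    and act :: "(nat \<Rightarrow> nat) \<Rightarrow> 'v list \<Rightarrow> 'a list \<Rightarrow> 'v"
    and e :: "'j \<Rightarrow> 'a" and v :: "'i \<Rightarrow> 'v"
  assumes "nmod_data.setting n k sA sV prodA act e v"
    and "1 \<le> k" and "k \<le> n - 1"
  shows "internal_direct_sum sV (nmod_data.V_part sV v) (nmod_data.Omega_V n k sA sV prodA act e v)
       \<and> (\<forall>\<alpha>\<in>nmod_data.Omega_V n k sA sV prodA act e v.
            nmod_data.k_submodule n k sV act (nmod_data.V_part sV v \<alpha>)
          \<and> nmod_data.inherited_basis_V sV v (nmod_data.V_part sV v \<alpha>))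
       \<and> internal_direct_sum sA (nmod_data.A_part sA e) (nmod_data.Omega_A n k sA sV prodA act e v)
       \<and> (\<forall>\<beta>\<in>nmod_data.Omega_A n k sA sV prodA act e v.
            nmod_data.ideal_A n sA prodA (nmod_data.A_part sA e \<beta>)
          \<and> nmod_data.inherited_basis_A sA e (nmod_data.A_part sA e \<beta>))
       \<and> (\<exists>f. bij_betw f (nmod_data.Omega'_V n k sA sV prodA act e v)
                         (nmod_data.Omega'_A n k sA sV prodA act e v)
            \<and> (\<forall>\<alpha>\<in>nmod_data.Omega'_V n k sA sV prodA act e v.
                 nmod_data.Pspan n sV act (nmod_data.V_part sV v \<alpha> # replicate (k - 1) UNIV)
                    (nmod_data.A_part sA e (f \<alpha>) # replicate (n - k - 1) UNIV) \<noteq> {0}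
               \<and> (\<forall>\<beta>\<in>nmod_data.Omega_A n k sA sV prodA act e v. \<beta> \<noteq> f \<alpha> \<longrightarrow>
                 nmod_data.Pspan n sV act (nmod_data.V_part sV v \<alpha> # replicate (k - 1) UNIV)
                    (nmod_data.A_part sA e \<beta> # replicate (n - k - 1) UNIV) = {0})))"
proof -
  \<comment> \<open>1 \<le> k is already part of the setting\<close>
  interpret nmod n k sA sV prodA act e v
    using assms(1,3) by unfold_locales
  have "\<forall>\<alpha>\<in>Omega_V. k_submodule (V_part \<alpha>) \<and> inherited_basis_V (V_part \<alpha>)"
    using k_submodule_V_part inherited_basis_V_part by (simp add: Omega_V_def)
  moreover have "\<forall>\<beta>\<in>Omega_A. ideal_A (A_part \<beta>) \<and> inherited_basis_A (A_part \<beta>)"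
    using ideal_A_part inherited_basis_A_part by (simp add: Omega_A_def)
  moreover have "Omega'_V = Omega'_A" using Omega'_V_eq Omega'_A_eq by simp
  moreover have "\<forall>\<alpha>\<in>Omega'_V.
      Pspan (V_part \<alpha> # replicate (k - 1) UNIV) (A_part \<alpha> # replicate (n - k - 1) UNIV) \<noteq> {0} \<and>
      (\<forall>\<beta>\<in>Omega_A. \<beta> \<noteq> \<alpha> \<longrightarrow>
         Pspan (V_part \<alpha> # replicate (k - 1) UNIV) (A_part \<beta> # replicate (n - k - 1) UNIV) = {0})"
    using Pspan_V_part_A_part_neq_0_iff unfolding Omega'_V_eq Omega_A_def by auto
  ultimately show ?thesis
    using internal_direct_sum_V_part internal_direct_sum_A_part
    by (intro conjI exI[of _ id]) simp_all
qed

end
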